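(* Let $F$ be a field with $\mathrm{char}\,F\ne2$ and let $A$ be an involutive $F$-algebra with norm $n(a)=a\bar a$. (1) If $A$ is reversible, then $A$ is von-Neumann finite. (2) If $A$ is von-Neumann finite and $n$ is anisotropic, then $A$ is reversible.
   Context: Algebras are unital, with bilinear not necessarily associative multiplication. $A$ is involutive if there is an anti-automorphism $a\mapsto\bar a$ with $\bar{\bar a}=a$, $a+\bar a\in F1$ and $a\bar a\in F1$ for all $a$; the norm $n(a)=a\bar a\in F$ is a quadratic form, anisotropic if $n(a)\ne0$ for all $a\ne0$. von-Neumann finite: $ab=1\Rightarrow ba=1$; reversible: $ab=0\Rightarrow ba=0$. *)

theory Defs
  imports Complex_Main
begin

definition unital_algebra ::
  "('f::field \<Rightarrow> 'a::ab_group_add \<Rightarrow> 'a) \<Rightarrow> ('a \<Rightarrow> 'a \<Rightarrow> 'a) \<Rightarrow> 'a \<Rightarrow> bool" where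
  "unital_algebra sc mul e \<longleftrightarrow>
     vector_space sc \<and>
     (\<forall>x y z. mul (x + y) z = mul x z + mul y z) \<and>
     (\<forall>x y z. mul x (y + z) = mul x y + mul x z) \<and>
     (\<forall>c x y. mul (sc c x) y = sc c (mul x y)) \<and>
     (\<forall>c x y. mul x (sc c y) = sc c (mul x y)) \<and>
     (\<forall>x. mul e x = x \<and> mul x e = x)"

definition involutive_algebra ::
  "('f::field \<Rightarrow> 'a::ab_group_add \<Rightarrow> 'a) \<Rightarrow> ('a \<Rightarrow> 'a \<Rightarrow> 'a) \<Rightarrow> 'a \<Rightarrow> ('a \<Rightarrow> 'a) \<Rightarrow> bool" where
  "involutive_algebra sc mul e cj \<longleftrightarrow>
     unital_algebra sc mul e \<and>
     bij cj \<and>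
     (\<forall>x y. cj (x + y) = cj x + cj y) \<and>
     (\<forall>c x. cj (sc c x) = sc c (cj x)) \<and>
     (\<forall>x y. cj (mul x y) = mul (cj y) (cj x)) \<and>
     (\<forall>x. cj (cj x) = x) \<and>
     (\<forall>a. \<exists>c. a + cj a = sc c e) \<and>
     (\<forall>a. \<exists>c. mul a (cj a) = sc c e)"

definition alg_norm ::
  "('f::field \<Rightarrow> 'a::ab_group_add \<Rightarrow> 'a) \<Rightarrow> ('a \<Rightarrow> 'a \<Rightarrow> 'a) \<Rightarrow> 'a \<Rightarrow> ('a \<Rightarrow> 'a) \<Rightarrow> 'a \<Rightarrow> 'f" where
  "alg_norm sc mul e cj a = (THE c. mul a (cj a) = sc c e)"

definition norm_anisotropic ::
  "('f::field \<Rightarrow> 'a::ab_group_add \<Rightarrow> 'a) \<Rightarrow> ('a \<Rightarrow> 'a \<Rightarrow> 'a) \<Rightarrow> 'a \<Rightarrow> ('a \<Rightarrow> 'a) \<Rightarrow> bool" where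
  "norm_anisotropic sc mul e cj \<longleftrightarrow> (\<forall>a. a \<noteq> 0 \<longrightarrow> alg_norm sc mul e cj a \<noteq> 0)"

definition vN_finite :: "('a \<Rightarrow> 'a \<Rightarrow> 'a) \<Rightarrow> 'a \<Rightarrow> bool" where
  "vN_finite mul e \<longleftrightarrow> (\<forall>a b. mul a b = e \<longrightarrow> mul b a = e)"

definition reversible :: "('a::zero \<Rightarrow> 'a \<Rightarrow> 'a) \<Rightarrow> bool" where
  "reversible mul \<longleftrightarrow> (\<forall>a b. mul a b = 0 \<longrightarrow> mul b a = 0)"

end

theory Submission
  imports Defs
begin

text \<open>If a b = e and n(a) = c \<noteq> 0, then a (c b - \<bar>a\<bar>) = 0, so reversibility gives
  (c b - \<bar>a\<bar>) a = 0, i.e. c (b a) = c e; symmetrically when n(b) \<noteq> 0. If instead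
  n(a) = 0, then b + g \<bar>a\<bar> is still a right inverse of a with the same product with a on
  the left, and since t(b a) = t(a b) = 2 its norm is n(b) + 2g, which equals 1 for
  g = (1 - n(b))/2. For the converse, if a b = 0 with a \<noteq> 0, then
  (b + \<bar>a\<bar>)/n(a) is a right inverse of a, hence a left inverse, which forces b a = 0.\<close>

locale inv_alg =
  fixes sc :: "'f::field \<Rightarrow> 'a::ab_group_add \<Rightarrow> 'a"
    and mul :: "'a \<Rightarrow> 'a \<Rightarrow> 'a" and e :: 'a and cj :: "'a \<Rightarrow> 'a"
  assumes alg: "involutive_algebra sc mul e cj"
begin

sublocale vs: vector_space sc
  using alg unfolding involutive_algebra_def unital_algebra_def by blast

lemma mul_add_left: "mul (x + y) z = mul x z + mul y z"
  and mul_add_right: "mul x (y + z) = mul x y + mul x z"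
  and mul_scale_left: "mul (sc c x) y = sc c (mul x y)"
  and mul_scale_right: "mul x (sc c y) = sc c (mul x y)"
  and mul_unit_left: "mul e x = x"
  and mul_unit_right: "mul x e = x"
  and cj_add: "cj (x + y) = cj x + cj y"
  and cj_scale: "cj (sc c x) = sc c (cj x)"
  and cj_mul: "cj (mul x y) = mul (cj y) (cj x)"
  and cj_cj: "cj (cj x) = x"
  and trace_ex: "\<exists>c. x + cj x = sc c e"
  and norm_ex: "\<exists>c. mul x (cj x) = sc c e"
  using alg unfolding involutive_algebra_def unital_algebra_def by fastforce+

lemma mul_zero_left [simp]: "mul 0 z = 0"
  using mul_add_left[of 0 0 z] by simp

lemma mul_zero_right [simp]: "mul z 0 = 0"
  using mul_add_right[of z 0 0] by simp

lemma mul_diff_left: "mul (x - y) z = mul x z - mul y z"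
  using mul_add_left[of "x - y" y z] by (simp add: eq_diff_eq)

lemma mul_diff_right: "mul z (x - y) = mul z x - mul z y"
  using mul_add_right[of z "x - y" y] by (simp add: eq_diff_eq)

lemma cj_unit: "cj e = e"
proof -
  have "cj (cj e) = mul (cj (cj e)) (cj e)"
    using cj_mul[of e "cj e"] by (simp only: mul_unit_left)
  thus ?thesis by (simp only: cj_cj mul_unit_left)
qed

lemma unit_zero_imp_trivial: "e = 0 \<Longrightarrow> (x::'a) = 0"
  using mul_unit_right[of x] by simp

definition trace :: "'a \<Rightarrow> 'f" where
  "trace x = (SOME c. x + cj x = sc c e)"

definition nrm :: "'a \<Rightarrow> 'f" where
  "nrm x = (SOME c. mul x (cj x) = sc c e)"

lemma add_cj_eq_trace: "x + cj x = sc (trace x) e"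
  unfolding trace_def using someI_ex[OF trace_ex] .

lemma mul_cj_eq_nrm: "mul x (cj x) = sc (nrm x) e"
  unfolding nrm_def using someI_ex[OF norm_ex] .

lemma cj_eq_trace_diff: "cj x = sc (trace x) e - x"
  using add_cj_eq_trace[of x] by (simp add: algebra_simps)

lemma cj_mul_eq_nrm: "mul (cj x) x = sc (nrm x) e"
proof -
  have "mul (cj x) x = sc (trace x) x - mul x x"
    by (subst cj_eq_trace_diff) (simp add: mul_diff_left mul_scale_left mul_unit_left)
  also have "\<dots> = mul x (cj x)"
    unfolding cj_eq_trace_diff[of x] by (simp add: mul_diff_right mul_scale_right mul_unit_right)
  finally show ?thesis using mul_cj_eq_nrm by simp
qed

lemma alg_norm_eq_nrm:
  assumes "e \<noteq> 0"
  shows "alg_norm sc mul e cj x = nrm x"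
  unfolding alg_norm_def by (rule the_equality) (use mul_cj_eq_nrm[of x] assms in auto)

text \<open>t(x y) = t(y x), stated without scalars: expanding
  \<bar>x y\<bar> = (t(y) - y)(t(x) - x) shows both sides equal x y + y x - t(y) x - t(x) y + t(x) t(y).\<close>

lemma add_cj_mul_commute: "mul x y + cj (mul x y) = mul y x + cj (mul y x)"
proof -
  have expand: "\<And>p q x y. mul (sc p e - y) (sc q e - x)
      = sc p (sc q e) - sc p x - sc q y + mul y x"
    by (simp add: mul_diff_left mul_diff_right mul_scale_left mul_scale_right
        mul_unit_left mul_unit_right vs.scale_right_diff_distrib algebra_simps)
  have xy: "cj (mul x y) = sc (trace y) (sc (trace x) e) - sc (trace y) x - sc (trace x) y + mul y x"
    using expand[of "trace y" y "trace x" x] by (simp add: cj_mul cj_eq_trace_diff[symmetric])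
  have yx: "cj (mul y x) = sc (trace x) (sc (trace y) e) - sc (trace x) y - sc (trace y) x + mul x y"
    using expand[of "trace x" x "trace y" y] by (simp add: cj_mul cj_eq_trace_diff[symmetric])
  have comm: "sc (trace y) (sc (trace x) e) = sc (trace x) (sc (trace y) e)"
    by (rule vs.scale_left_commute)
  show ?thesis unfolding xy yx comm by (simp add: algebra_simps del: vs.scale_scale)
qed

lemma reversible_right_inverse_swap_left:
  assumes rev: "reversible mul" and ab: "mul a b = e"
    and aa: "mul a (cj a) = sc c e" and c: "c \<noteq> 0"
  shows "mul b a = e"
proof -
  have aa': "mul (cj a) a = sc c e" using cj_mul_eq_nrm[of a] mul_cj_eq_nrm[of a] aa by metis
  have "mul a (sc c b - cj a) = 0"
    by (simp add: mul_diff_right mul_scale_right ab aa)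
  hence "mul (sc c b - cj a) a = 0" using rev unfolding reversible_def by blast
  hence "sc c (mul b a) = sc c e" by (simp add: mul_diff_left mul_scale_left aa')
  thus ?thesis using c by simp
qed

lemma reversible_right_inverse_swap_right:
  assumes rev: "reversible mul" and ab: "mul a b = e"
    and bb: "mul b (cj b) = sc c e" and c: "c \<noteq> 0"
  shows "mul b a = e"
proof -
  have bb': "mul (cj b) b = sc c e" using cj_mul_eq_nrm[of b] mul_cj_eq_nrm[of b] bb by metis
  have "mul (sc c a - cj b) b = 0"
    by (simp add: mul_diff_left mul_scale_left ab bb')
  hence "mul b (sc c a - cj b) = 0" using rev unfolding reversible_def by blast
  hence "sc c (mul b a) = sc c e" by (simp add: mul_diff_right mul_scale_right bb)
  thus ?thesis using c by simp
qed

lemma isotropic_right_inverse_normalize: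
  assumes two: "(2::'f) \<noteq> 0" and ab: "mul a b = e" and iso: "nrm a = 0"
  obtains b' where "mul a b' = e" "mul b' a = mul b a" "mul b' (cj b') = sc 1 e"
proof
  have aa: "mul a (cj a) = 0" and aa': "mul (cj a) a = 0"
    using mul_cj_eq_nrm[of a] cj_mul_eq_nrm[of a] iso by simp_all
  define g where "g = (1 - nrm b) / 2"
  define b' where "b' = b + sc g (cj a)"
  show "mul a b' = e" unfolding b'_def by (simp add: mul_add_right mul_scale_right ab aa)
  show "mul b' a = mul b a" unfolding b'_def by (simp add: mul_add_left mul_scale_left aa')
  have trace_ba: "mul b a + cj (mul b a) = e + e"
    using add_cj_mul_commute[of a b] ab cj_unit by simp
  have cj_b': "cj b' = cj b + sc g a" unfolding b'_def by (simp only: cj_add cj_scale cj_cj)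
  have "mul b' (cj b') = mul b (cj b) + sc g (mul b a)
      + (sc g (mul (cj a) (cj b)) + sc g (sc g (mul (cj a) a)))"
    unfolding cj_b' unfolding b'_def
    by (simp only: mul_add_left mul_add_right mul_scale_left mul_scale_right
        vs.scale_right_distrib) (simp only: ac_simps)
  also have "\<dots> = sc (nrm b) e + sc g (mul b a + cj (mul b a))"
    by (simp only: aa' mul_cj_eq_nrm cj_mul vs.scale_zero_right add_0_right
        vs.scale_right_distrib add.assoc)
  also have "\<dots> = sc (nrm b + 2 * g) e"
    by (simp only: trace_ba vs.scale_left_distrib vs.scale_right_distrib vs.scale_scale
        mult_2 distrib_right)
  also have "nrm b + 2 * g = 1" unfolding g_def using two by (simp add: field_simps)
  finally show "mul b' (cj b') = sc 1 e" .
qed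

lemma reversible_imp_vN_finite:
  assumes two: "(2::'f) \<noteq> 0" and rev: "reversible mul"
  shows "vN_finite mul e"
  unfolding vN_finite_def
proof (intro allI impI)
  fix a b assume ab: "mul a b = e"
  show "mul b a = e"
  proof (cases "nrm a = 0")
    case False
    with reversible_right_inverse_swap_left[OF rev ab mul_cj_eq_nrm] show ?thesis by blast
  next
    case True
    then obtain b' where "mul a b' = e" "mul b' a = mul b a" "mul b' (cj b') = sc 1 e"
      using isotropic_right_inverse_normalize[OF two ab] by blast
    then show ?thesis using reversible_right_inverse_swap_right[OF rev] by (metis one_neq_zero)
  qed
qed

lemma vN_finite_anisotropic_imp_reversible:
  assumes vn: "vN_finite mul e" and an: "norm_anisotropic sc mul e cj"
  shows "reversible mul"
  unfolding reversible_def
proof (intro allI impI)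
  fix a b assume ab: "mul a b = 0"
  show "mul b a = 0"
  proof (cases "e = 0 \<or> a = 0")
    case True
    then show ?thesis using unit_zero_imp_trivial by auto
  next
    case False
    then have c: "nrm a \<noteq> 0"
      using an alg_norm_eq_nrm unfolding norm_anisotropic_def by metis
    let ?c = "nrm a"
    have "mul a (sc (inverse ?c) (b + cj a)) = e"
      using c by (simp add: mul_scale_right mul_add_right ab mul_cj_eq_nrm)
    hence "mul (sc (inverse ?c) (b + cj a)) a = e" using vn unfolding vN_finite_def by blast
    hence "sc (inverse ?c) (mul b a + sc ?c e) = e"
      by (simp add: mul_scale_left mul_add_left cj_mul_eq_nrm)
    hence "sc ?c (sc (inverse ?c) (mul b a + sc ?c e)) = sc ?c e" by simp
    hence "mul b a + sc ?c e = sc ?c e" using c by simp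
    thus ?thesis by simp
  qed
qed

end

theorem corollary4p10:
  fixes sc :: "'f::field \<Rightarrow> 'a::ab_group_add \<Rightarrow> 'a"
    and mul :: "'a \<Rightarrow> 'a \<Rightarrow> 'a" and e :: 'a and cj :: "'a \<Rightarrow> 'a"
  assumes char: "(2::'f) \<noteq> 0"
    and alg: "involutive_algebra sc mul e cj"
  shows "(reversible mul \<longrightarrow> vN_finite mul e) \<and>
         (vN_finite mul e \<and> norm_anisotropic sc mul e cj \<longrightarrow> reversible mul)"
proof -
  interpret inv_alg sc mul e cj using alg by unfold_locales
  show ?thesis
    using reversible_imp_vN_finite[OF char] vN_finite_anisotropic_imp_reversible by blast
qed

end
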